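(* Assume $\|\hat F'(y)-\hat F'(x)\|_F\le L_{\hat F}\|y-x\|$ for all $x,y\in\mathcal F$. Suppose that for Scheme 1 there is $x^*\in\mathcal L(\hat f_1(x_0))$ with $\hat F(x^* )=0$ and $\sigma_{\min}(\hat F'(x^* ))\ge\varsigma>0$. (i) If $\varsigma>\frac{2L_{\hat F}}{\alpha}$ for some fixed $\alpha\in(0,1)$, then for every $k\in\mathbb Z_+$, every $\varepsilon_k\ge0$, whenever $\|x_k-x^*\|<\frac{\varsigma}{L_{\hat F}}-\frac2\alpha$ and $$0<\tau_k\le\frac{\Big(\big(\alpha(\varsigma-L_{\hat F}\|x_k-x^*\|)-\frac{3L_{\hat F}}{2}\big)^2-\frac{L_{\hat F}^2}{4}\Big)\|x_k-x^*\|^4}{\|x_k-x^*\|^2L_k+2\varepsilon_k},$$ we have $x_{k+1}\in\mathcal L(\hat f_1(x_0))$ and $$\|x_{k+1}-x^*\|\le\frac{\frac{3L_{\hat F}\|x_k-x^*\|^2}{2}+\sqrt{\|x_k-x^*\|^2\big(\tau_kL_k+\frac{L_{\hat F}^2\|x_k-x^*\|^2}{4}\big)+2\tau_k\varepsilon_k}}{\varsigma-L_{\hat F}\|x_k-x^*\|}\le\alpha\|x_k-x^*\|^2.$$ (ii) If no such $\alpha\in(0,1)$ exists, then in Scheme 1 with $\tau_k=c_1\|x_k-x^*\|^2$ ($c_1>0$) and $\varepsilon_k=c_2\|x_k-x^*\|^2$ ($c_2\ge0$), whenever $\|x_k-x^*\|\le\varsigma\big/\big(\frac{5L_{\hat F}}{2}+\sqrt{2c_1L_{\hat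 F}+\frac{L_{\hat F}^2}{4}+2c_1c_2}\big)$, the middle expression above is at most $\|x_k-x^*\|$ (so $\|x_{k+1}-x^*\|\le\|x_k-x^*\|$) and $x_{k+1}\in\mathcal L(\hat f_1(x_0))$.
   Context: Let $F:\mathbb R^n\to\mathbb R^m$ be smooth, $\hat F=\frac1{\sqrt m}F$ with Jacobian $\hat F'(x)$; Euclidean norms, spectral norm for matrices, $\|\cdot\|_F$ Frobenius norm; $\sigma_{\min}$ is the minimal singular value. $\hat f_1(x)=\|\hat F(x)\|$, $\phi(x,y)=\|\hat F(x)+\hat F'(x)(y-x)\|$, $\psi_{x,L,\tau}(y)=\frac\tau2+\frac{\phi(x,y)^2}{2\tau}+\frac L2\|y-x\|^2$, $T_{L,\tau}(x)=\arg\min_y\psi_{x,L,\tau}(y)$. $\mathcal F$ is closed convex with nonempty interior, $\mathcal L(v)=\{x:\hat f_1(x)\le v\}$, and $\mathcal L(\hat f_1(x_0))\subseteq\mathcal F$ with the generated sequence in $\mathcal F$. Scheme 1 (input $x_0$, a rule choosing $\varepsilon_k\ge0,\tau_k>0$, $L\in(0,L_{\hat F}]$, $L_0=L$): for $k=0,1,\dots$: choose $\tau_k,\varepsilon_k$; compute $x_{k+1}$ with $\psi_{x_k,L_k,\tau_k}(x_{k+1})-\psi_{x_k,L_k,\tau_k}(T_{L_k,\tau_k}(x_k))\le\varepsilon_k$ and $\hat f_1(x_k)\ge\psi_{x_k,L_k,\tau_k}(x_{k+1})$; if $\hat f_1(x_{k+1})>\psi_{x_k,L_k,\tau_k}(x_{k+1})$,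 set $L_k:=\min\{2L_k,2L_{\hat F}\}$ and repeat the iteration; otherwise $L_{k+1}=\max\{L_k/2,L\}$. *)

theory Defs
  imports "HOL-Analysis.Analysis"
begin

text \<open>F : R^n -> R^m is modelled as F :: real^'n => real^'m, with Jacobian
  J :: real^'n => real^'n^'m (an m x n matrix); m = CARD('m).\<close>

definition Fhat :: "(real^'n \<Rightarrow> real^'m) \<Rightarrow> real^'n \<Rightarrow> real^'m" where
  "Fhat F x = (1 / sqrt (real CARD('m))) *\<^sub>R F x"

definition Jhat :: "(real^'n \<Rightarrow> real^'n^'m) \<Rightarrow> real^'n \<Rightarrow> real^'n^'m" where
  "Jhat J x = (1 / sqrt (real CARD('m))) *\<^sub>R J x"

definition frob :: "real^'n^'m \<Rightarrow> real" where
  "frob A = sqrt (\<Sum>i\<in>UNIV. \<Sum>j\<in>UNIV. (A $ i $ j)\<^sup>2)"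

definition sigma_min :: "real^'n^'m \<Rightarrow> real" where
  "sigma_min A = Inf {norm (A *v v) | v. norm v = 1}"

definition fhat1 :: "(real^'n \<Rightarrow> real^'m) \<Rightarrow> real^'n \<Rightarrow> real" where
  "fhat1 F x = norm (Fhat F x)"

definition phi :: "(real^'n \<Rightarrow> real^'m) \<Rightarrow> (real^'n \<Rightarrow> real^'n^'m) \<Rightarrow> real^'n \<Rightarrow> real^'n \<Rightarrow> real" where
  "phi F J x y = norm (Fhat F x + Jhat J x *v (y - x))"

definition psi :: "(real^'n \<Rightarrow> real^'m) \<Rightarrow> (real^'n \<Rightarrow> real^'n^'m) \<Rightarrow> real^'n \<Rightarrow> real \<Rightarrow> real \<Rightarrow> real^'n \<Rightarrow> real" where
  "psi F J x L \<tau> y = \<tau> / 2 + (phi F J x y)\<^sup>2 / (2 * \<tau>) + L / 2 * (norm (y - x))\<^sup>2"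

definition Tmap :: "(real^'n \<Rightarrow> real^'m) \<Rightarrow> (real^'n \<Rightarrow> real^'n^'m) \<Rightarrow> real \<Rightarrow> real \<Rightarrow> real^'n \<Rightarrow> real^'n" where
  "Tmap F J L \<tau> x = (SOME y. \<forall>z. psi F J x L \<tau> y \<le> psi F J x L \<tau> z)"

definition level :: "(real^'n \<Rightarrow> real^'m) \<Rightarrow> real \<Rightarrow> (real^'n) set" where
  "level F v = {x. fhat1 F x \<le> v}"

definition admissible_step :: "(real^'n \<Rightarrow> real^'m) \<Rightarrow> (real^'n \<Rightarrow> real^'n^'m) \<Rightarrow> real^'n \<Rightarrow> real \<Rightarrow> real \<Rightarrow> real \<Rightarrow> real^'n \<Rightarrow> bool" where
  "admissible_step F J x L \<tau> \<epsilon> y \<longleftrightarrow>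
     psi F J x L \<tau> y - psi F J x L \<tau> (Tmap F J L \<tau> x) \<le> \<epsilon> \<and>
     fhat1 F x \<ge> psi F J x L \<tau> y"

text \<open>A run of Scheme 1.  x k are the iterates, Lk k is the value of L_k actually used
  in the accepted step k, tau k and eps k the parameters of that accepted step.
  Linit k is the value of L_k at the start of iteration k (L_0 = L,
  L_{k+1} = max (L_k/2) L); it is doubled (capped at 2 L_F) j times, each doubling
  caused by a rejected trial point.\<close>
definition scheme1 :: "(real^'n \<Rightarrow> real^'m) \<Rightarrow> (real^'n \<Rightarrow> real^'n^'m) \<Rightarrow> real \<Rightarrow> real \<Rightarrow>
    real^'n \<Rightarrow> (nat \<Rightarrow> real^'n) \<Rightarrow> (nat \<Rightarrow> real) \<Rightarrow> (nat \<Rightarrow> real) \<Rightarrow> (nat \<Rightarrow> real) \<Rightarrow> bool" where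
  "scheme1 F J LF L x0 x Lk \<tau> \<epsilon> \<longleftrightarrow>
     0 < L \<and> L \<le> LF \<and> x 0 = x0 \<and>
     (\<forall>k. 0 < \<tau> k \<and> 0 \<le> \<epsilon> k \<and>
        (let Linit = (if k = 0 then L else max (Lk (k - 1) / 2) L);
             dbl = (\<lambda>t. min (2 * t) (2 * LF))
         in \<exists>j. Lk k = (dbl ^^ j) Linit \<and>
              (\<forall>i<j. \<exists>y \<tau>' \<epsilon>'. 0 < \<tau>' \<and> 0 \<le> \<epsilon>' \<and>
                  admissible_step F J (x k) ((dbl ^^ i) Linit) \<tau>' \<epsilon>' y \<and>
                  fhat1 F y > psi F J (x k) ((dbl ^^ i) Linit) \<tau>' y)) \<and>
        admissible_step F J (x k) (Lk k) (\<tau> k) (\<epsilon> k) (x (Suc k)) \<and>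
        fhat1 F (x (Suc k)) \<le> psi F J (x k) (Lk k) (\<tau> k) (x (Suc k)))"

definition mid_bound :: "real \<Rightarrow> real \<Rightarrow> real \<Rightarrow> real \<Rightarrow> real \<Rightarrow> real \<Rightarrow> real" where
  "mid_bound LF \<sigma> r Lk \<tau> \<epsilon> =
     (3 * LF * r\<^sup>2 / 2 + sqrt (r\<^sup>2 * (\<tau> * Lk + LF\<^sup>2 * r\<^sup>2 / 4) + 2 * \<tau> * \<epsilon>)) / (\<sigma> - LF * r)"

end

theory Submission
  imports Defs
begin

text \<open>Let \<open>r = \<parallel>x\<^sub>k - x\<^sup>*\<parallel>\<close>. The Lipschitz bound on \<open>F'\<close> gives the linearisation
  estimate \<open>\<parallel>F(y) - F(x) - F'(x)(y - x)\<parallel> \<le> L\<^sub>F \<parallel>y - x\<parallel>\<^sup>2 / 2\<close>, so the linear model at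
  \<open>x\<^sub>k\<close> is \<open>L\<^sub>F r\<^sup>2 / 2\<close>-small at the root. Comparing \<open>\<psi>\<close> at \<open>x\<^sub>k\<^sub>+\<^sub>1\<close> with its value at
  \<open>x\<^sup>*\<close> bounds the model at \<open>x\<^sub>k\<^sub>+\<^sub>1\<close> by \<open>\<surd>(r\<^sup>2(\<tau> L\<^sub>k + L\<^sub>F\<^sup>2 r\<^sup>2/4) + 2\<tau>\<epsilon>)\<close>, and the
  singular value bound \<open>\<sigma>\<^sub>m\<^sub>i\<^sub>n(F'(x\<^sub>k)) \<ge> \<sigma> - L\<^sub>F r\<close> turns the sum of the two model values into
  the bound on \<open>\<parallel>x\<^sub>k\<^sub>+\<^sub>1 - x\<^sup>*\<parallel>\<close>. Both parts of the theorem then reduce to elementary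
  inequalities for this bound, using \<open>L\<^sub>k \<le> 2L\<^sub>F\<close> and monotonicity of \<open>f\<^sub>1\<close> along the scheme.\<close>

lemma norm_matrix_vector_le_frob: "norm (A *v v) \<le> frob A * norm v"
proof -
  have "(norm (A *v v))\<^sup>2 = (\<Sum>i\<in>UNIV. (A $ i \<bullet> v)\<^sup>2)"
    by (simp only: power2_norm_eq_inner inner_vec_def matrix_vector_mul_component)
      (simp add: power2_eq_square)
  also have "\<dots> \<le> (\<Sum>i\<in>UNIV. (A $ i \<bullet> A $ i) * (v \<bullet> v))"
    by (rule sum_mono) (rule Cauchy_Schwarz_ineq)
  also have "\<dots> = (frob A * norm v)\<^sup>2"
    by (simp add: frob_def power_mult_distrib sum_nonneg sum_distrib_right inner_vec_def
        power2_eq_square[symmetric] power2_norm_eq_inner)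
  finally show ?thesis
    by (rule power2_le_imp_le) (simp add: frob_def sum_nonneg)
qed

lemma sigma_min_mult_norm_le:
  assumes "s \<le> sigma_min A"
  shows "s * norm v \<le> norm (A *v v)"
proof (cases "v = 0")
  case False
  let ?u = "(1 / norm v) *\<^sub>R v"
  have "sigma_min A \<le> norm (A *v ?u)"
    unfolding sigma_min_def
    by (rule cInf_lower) (use False in \<open>auto intro: bdd_belowI[where m=0]\<close>)
  also have "\<dots> = norm (A *v v) / norm v"
    by (simp add: matrix_vector_mult_scaleR)
  finally have "sigma_min A * norm v \<le> norm (A *v v)"
    using False by (simp add: field_simps)
  then show ?thesis
    using assms by (meson mult_right_mono norm_ge_zero order_trans)
qed simp

lemma Fhat_has_derivative:
  assumes "(F has_derivative (\<lambda>h. J z *v h)) (at z)"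
  shows "(Fhat F has_derivative (\<lambda>h. Jhat J z *v h)) (at z)"
  using has_derivative_scaleR_right[OF assms, of "1 / sqrt (real CARD('m))"]
  unfolding Fhat_def[abs_def] Jhat_def by (simp add: scaleR_matrix_vector_assoc)

lemma linearization_error_le:
  fixes G :: "real^'n \<Rightarrow> real^'m"
  assumes deriv: "\<And>z. (G has_derivative (\<lambda>h. A z *v h)) (at z)"
    and conv: "convex S" and xS: "x \<in> S" and yS: "y \<in> S" and LF: "0 \<le> LF"
    and lip: "\<And>u v. u \<in> S \<Longrightarrow> v \<in> S \<Longrightarrow> frob (A v - A u) \<le> LF * norm (v - u)"
  shows "norm (G y - G x - A x *v (y - x)) \<le> LF / 2 * (norm (y - x))\<^sup>2"
proof -
  define d where "d = y - x"
  define w where "w = G y - G x - A x *v d"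
  define r where "r = norm d"
  \<comment> \<open>The component of the error along \<open>w\<close>, corrected by the quadratic majorant, is nonincreasing on \<open>[0, 1]\<close>.\<close>
  define k where "k = (\<lambda>t. G (x + t *\<^sub>R d) \<bullet> w - t * ((A x *v d) \<bullet> w)
                           - LF / 2 * r\<^sup>2 * norm w * t\<^sup>2)"
  have "k 1 \<le> k 0"
  proof (rule DERIV_nonpos_imp_nonincreasing[of 0 1 k])
    fix t :: real assume t: "0 \<le> t" "t \<le> 1"
    let ?z = "x + t *\<^sub>R d"
    let ?D = "(A ?z *v d) \<bullet> w - (A x *v d) \<bullet> w - LF / 2 * r\<^sup>2 * norm w * (2 * t)"
    have line: "((\<lambda>t. x + t *\<^sub>R d) has_derivative (\<lambda>h. h *\<^sub>R d)) (at t)"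
      by (auto intro!: derivative_eq_intros)
    from has_derivative_compose[OF line deriv]
    have "((\<lambda>t. G (x + t *\<^sub>R d)) has_derivative (\<lambda>h. h *\<^sub>R (A ?z *v d))) (at t)"
      by (simp add: matrix_vector_mult_scaleR)
    then have "(k has_real_derivative ?D) (at t)"
      unfolding k_def has_field_derivative_def
      by (auto intro!: derivative_eq_intros simp: algebra_simps)
    moreover have "?D \<le> 0"
    proof -
      have zS: "?z \<in> S"
        using convexD[OF conv xS yS, of "1 - t" t] t by (simp add: d_def algebra_simps)
      have "(A ?z *v d) \<bullet> w - (A x *v d) \<bullet> w = ((A ?z - A x) *v d) \<bullet> w"
        by (simp add: matrix_vector_mult_diff_rdistrib inner_diff_left)
      also have "\<dots> \<le> frob (A ?z - A x) * r * norm w"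
        using norm_cauchy_schwarz norm_matrix_vector_le_frob
        by (smt (verit) mult_right_mono norm_ge_zero r_def)
      also have "\<dots> \<le> LF * (t * r) * r * norm w"
        using lip[OF xS zS] t by (intro mult_right_mono) (auto simp: r_def)
      finally show ?thesis by (simp add: power2_eq_square algebra_simps)
    qed
    ultimately show "\<exists>y. (k has_real_derivative y) (at t) \<and> y \<le> 0" by blast
  qed simp
  then have "norm w * norm w \<le> (LF / 2 * r\<^sup>2) * norm w"
    by (simp add: k_def w_def d_def inner_diff_left algebra_simps
        power2_eq_square[symmetric] power2_norm_eq_inner)
  then have "norm w \<le> LF / 2 * r\<^sup>2"
    using LF by (cases "norm w = 0") (auto simp: mult_le_cancel_right)
  then show ?thesis by (simp add: w_def r_def d_def)
qed

text \<open>\<open>\<psi>\<close> is coercive and continuous, so \<open>Tmap\<close> really selects a global minimiser.\<close>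

lemma psi_Tmap_le:
  assumes L: "0 < L" and tau: "0 < \<tau>"
  shows "psi F J x L \<tau> (Tmap F J L \<tau> x) \<le> psi F J x L \<tau> z"
proof -
  let ?P = "psi F J x L \<tau>"
  have coercive: "L / 2 * (norm (y - x))\<^sup>2 \<le> ?P y" for y
    unfolding psi_def using tau by (auto intro!: add_nonneg_nonneg)
  define R where "R = sqrt (2 * ?P x / L)"
  have Px: "0 \<le> ?P x" using coercive[of x] by simp
  have cont: "continuous_on (cball x R) ?P"
    unfolding psi_def phi_def
    by (intro continuous_intros matrix_vector_mult_linear_continuous_on[THEN continuous_on_compose2])
      (use tau in auto)
  have xR: "x \<in> cball x R" using Px L by (simp add: R_def)
  then obtain m where mmin: "\<forall>y\<in>cball x R. ?P m \<le> ?P y"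
    using continuous_attains_inf[OF compact_cball _ cont] by blast
  have "?P m \<le> ?P z" for z
  proof (cases "z \<in> cball x R")
    case False
    then have "R\<^sup>2 \<le> (norm (z - x))\<^sup>2"
      using Px L by (intro power_mono) (auto simp: R_def dist_norm norm_minus_commute)
    then have "?P x \<le> L / 2 * (norm (z - x))\<^sup>2" using Px L by (simp add: R_def field_simps)
    then show ?thesis using coercive[of z] mmin xR by fastforce
  qed (use mmin in blast)
  then have "\<exists>y. \<forall>z. ?P y \<le> ?P z" by blast
  from someI_ex[OF this] show ?thesis unfolding Tmap_def by blast
qed

lemma phi_at_root_le:
  assumes deriv: "\<And>z. (F has_derivative (\<lambda>h. J z *v h)) (at z)"
    and "convex S" "x \<in> S" "xs \<in> S" "0 \<le> LF"
    and "\<And>u v. u \<in> S \<Longrightarrow> v \<in> S \<Longrightarrow> frob (Jhat J v - Jhat J u) \<le> LF * norm (v - u)"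
    and "Fhat F xs = 0"
  shows "phi F J x xs \<le> LF / 2 * (norm (x - xs))\<^sup>2"
proof -
  have "norm (Fhat F xs - Fhat F x - Jhat J x *v (xs - x)) \<le> LF / 2 * (norm (xs - x))\<^sup>2"
    using linearization_error_le[of "Fhat F" "Jhat J", OF Fhat_has_derivative[OF deriv] assms(2-6)] .
  moreover have "Fhat F xs - Fhat F x - Jhat J x *v (xs - x) = - (Fhat F x + Jhat J x *v (xs - x))"
    using assms(7) by simp
  ultimately show ?thesis
    by (simp only: phi_def norm_minus_cancel norm_minus_commute)
qed

lemma phi_step_sq_le:
  assumes "0 < L" "0 < \<tau>" and adm: "admissible_step F J x L \<tau> \<epsilon> y"
  shows "(phi F J x y)\<^sup>2 \<le> (phi F J x xs)\<^sup>2 + \<tau> * L * (norm (x - xs))\<^sup>2 + 2 * \<tau> * \<epsilon>"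
proof -
  have "psi F J x L \<tau> y \<le> psi F J x L \<tau> xs + \<epsilon>"
    using adm psi_Tmap_le[OF assms(1,2), of F J x xs] unfolding admissible_step_def by linarith
  moreover have "0 \<le> L / 2 * (norm (y - x))\<^sup>2" using \<open>0 < L\<close> by simp
  ultimately have "(phi F J x y)\<^sup>2 / (2 * \<tau>) \<le> (phi F J x xs)\<^sup>2 / (2 * \<tau>) + L / 2 * (norm (x - xs))\<^sup>2 + \<epsilon>"
    unfolding psi_def by (simp add: norm_minus_commute)
  then show ?thesis using \<open>0 < \<tau>\<close> by (simp add: field_simps)
qed

lemma dist_root_le_phi:
  assumes S: "x \<in> S" "xs \<in> S"
    and lip: "\<And>u v. u \<in> S \<Longrightarrow> v \<in> S \<Longrightarrow> frob (Jhat J v - Jhat J u) \<le> LF * norm (v - u)"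
    and sig: "\<sigma> \<le> sigma_min (Jhat J xs)"
  shows "(\<sigma> - LF * norm (x - xs)) * norm (y - xs) \<le> phi F J x y + phi F J x xs"
proof -
  let ?e = "y - xs"
  have "\<sigma> * norm ?e \<le> norm (Jhat J xs *v ?e)"
    by (rule sigma_min_mult_norm_le[OF sig])
  also have "Jhat J xs *v ?e = Jhat J x *v ?e + (Jhat J xs - Jhat J x) *v ?e"
    by (simp add: matrix_vector_mult_diff_rdistrib)
  also have "norm \<dots> \<le> norm (Jhat J x *v ?e) + norm ((Jhat J xs - Jhat J x) *v ?e)"
    by (rule norm_triangle_ineq)
  also have "norm ((Jhat J xs - Jhat J x) *v ?e) \<le> LF * norm (x - xs) * norm ?e"
    using norm_matrix_vector_le_frob[of "Jhat J xs - Jhat J x" ?e] lip[OF S]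
    by (smt (verit) mult_right_mono norm_ge_zero norm_minus_commute)
  also have "Jhat J x *v ?e = (Fhat F x + Jhat J x *v (y - x)) - (Fhat F x + Jhat J x *v (xs - x))"
    by (simp add: matrix_vector_mult_diff_distrib)
  also have "norm \<dots> \<le> phi F J x y + phi F J x xs"
    unfolding phi_def by (rule norm_triangle_ineq4)
  finally show ?thesis by (simp add: algebra_simps)
qed

lemma dist_step_root_le_mid_bound:
  assumes deriv: "\<And>z. (F has_derivative (\<lambda>h. J z *v h)) (at z)"
    and conv: "convex S" and S: "x \<in> S" "xs \<in> S" and LF: "0 \<le> LF"
    and lip: "\<And>u v. u \<in> S \<Longrightarrow> v \<in> S \<Longrightarrow> frob (Jhat J v - Jhat J u) \<le> LF * norm (v - u)"
    and root: "Fhat F xs = 0" and sig: "\<sigma> \<le> sigma_min (Jhat J xs)"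
    and L: "0 < L" and tau: "0 < \<tau>" and adm: "admissible_step F J x L \<tau> \<epsilon> y"
    and close: "LF * norm (x - xs) < \<sigma>"
  shows "norm (y - xs) \<le> mid_bound LF \<sigma> (norm (x - xs)) L \<tau> \<epsilon>"
proof -
  define r where "r = norm (x - xs)"
  have p: "phi F J x xs \<le> LF / 2 * r\<^sup>2"
    unfolding r_def by (rule phi_at_root_le[OF deriv conv S LF lip root])
  have "(phi F J x y)\<^sup>2 \<le> (LF / 2 * r\<^sup>2)\<^sup>2 + \<tau> * L * r\<^sup>2 + 2 * \<tau> * \<epsilon>"
    using phi_step_sq_le[OF L tau adm, of xs] p power_mono[OF p, of 2]
    by (simp add: r_def phi_def)
  then have "phi F J x y \<le> sqrt (r\<^sup>2 * (\<tau> * L + LF\<^sup>2 * r\<^sup>2 / 4) + 2 * \<tau> * \<epsilon>)"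
    by (simp add: real_le_rsqrt power2_eq_square algebra_simps)
  moreover have "0 \<le> LF * r\<^sup>2" using LF by simp
  ultimately have "norm (y - xs) * (\<sigma> - LF * r)
      \<le> 3 * LF * r\<^sup>2 / 2 + sqrt (r\<^sup>2 * (\<tau> * L + LF\<^sup>2 * r\<^sup>2 / 4) + 2 * \<tau> * \<epsilon>)"
    using dist_root_le_phi[OF S lip sig, of y F] p by (simp add: r_def mult.commute)
  then show ?thesis
    using close by (simp add: mid_bound_def r_def pos_le_divide_eq)
qed

lemma mid_bound_le_quadratic:
  fixes LF \<sigma> \<alpha> r Lk \<tau> \<epsilon> :: real
  assumes LF: "0 < LF" and \<alpha>: "0 < \<alpha>" and r: "r < \<sigma> / LF - 2 / \<alpha>"
    and tau: "0 < \<tau>" and Lk: "0 \<le> Lk" and eps: "0 \<le> \<epsilon>"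
    and tau_le: "\<tau> \<le> (((\<alpha> * (\<sigma> - LF * r) - 3 * LF / 2)\<^sup>2 - LF\<^sup>2 / 4) * r ^ 4) / (r\<^sup>2 * Lk + 2 * \<epsilon>)"
  shows "LF * r < \<sigma>" and "mid_bound LF \<sigma> r Lk \<tau> \<epsilon> \<le> \<alpha> * r\<^sup>2"
proof -
  define D where "D = \<sigma> - LF * r"
  define Den where "Den = r\<^sup>2 * Lk + 2 * \<epsilon>"
  define S where "S = r\<^sup>2 * (\<tau> * Lk + LF\<^sup>2 * r\<^sup>2 / 4) + 2 * \<tau> * \<epsilon>"
  have "LF * r < LF * (\<sigma> / LF - 2 / \<alpha>)"
    using r LF by simp
  also have "\<dots> = \<sigma> - 2 * LF / \<alpha>"
    using LF by (simp add: field_simps)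
  finally have "2 * LF / \<alpha> < D"
    by (simp add: D_def)
  then have aD: "2 * LF < \<alpha> * D" using \<alpha> by (simp add: field_simps)
  then have "0 < \<alpha> * D" using LF by linarith
  then have D: "0 < D" using \<alpha> zero_less_mult_pos by blast
  then show "LF * r < \<sigma>" by (simp add: D_def)
  have "Den \<noteq> 0"
    using tau tau_le by (auto simp: Den_def)
  then have "0 < Den" using Lk eps by (simp add: Den_def order_less_le)
  then have "\<tau> * Den \<le> ((\<alpha> * D - 3 * LF / 2)\<^sup>2 - LF\<^sup>2 / 4) * r ^ 4"
    using tau_le by (simp add: D_def Den_def pos_le_divide_eq)
  moreover have "S = \<tau> * Den + LF\<^sup>2 * r ^ 4 / 4"
    by (simp add: S_def Den_def algebra_simps power2_eq_square power4_eq_xxxx)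
  ultimately have "S \<le> (\<alpha> * D - 3 * LF / 2)\<^sup>2 * r ^ 4"
    by (simp add: left_diff_distrib)
  also have "\<dots> = ((\<alpha> * D - 3 * LF / 2) * r\<^sup>2)\<^sup>2"
    by (simp add: power_mult_distrib power4_eq_xxxx power2_eq_square mult_ac)
  finally have "S \<le> ((\<alpha> * D - 3 * LF / 2) * r\<^sup>2)\<^sup>2" .
  then have "sqrt S \<le> (\<alpha> * D - 3 * LF / 2) * r\<^sup>2"
    using aD LF by (intro real_le_lsqrt) auto
  then have "3 * LF * r\<^sup>2 / 2 + sqrt S \<le> \<alpha> * r\<^sup>2 * D"
    by (simp add: algebra_simps)
  then show "mid_bound LF \<sigma> r Lk \<tau> \<epsilon> \<le> \<alpha> * r\<^sup>2"
    using D unfolding mid_bound_def S_def[symmetric] D_def[symmetric] by (simp add: pos_divide_le_eq)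
qed

lemma mid_bound_le_radius:
  fixes LF \<sigma> r Lk c1 c2 :: real
  assumes LF: "0 < LF" and \<sigma>: "0 < \<sigma>" and r: "0 \<le> r"
    and c: "0 \<le> c1" "0 \<le> c2" and Lk: "Lk \<le> 2 * LF"
    and r_le: "r \<le> \<sigma> / (5 * LF / 2 + sqrt (2 * c1 * LF + LF\<^sup>2 / 4 + 2 * c1 * c2))"
  shows "LF * r < \<sigma>" and "mid_bound LF \<sigma> r Lk (c1 * r\<^sup>2) (c2 * r\<^sup>2) \<le> r"
proof -
  define Q where "Q = 2 * c1 * LF + LF\<^sup>2 / 4 + 2 * c1 * c2"
  define B where "B = 5 * LF / 2 + sqrt Q"
  have "0 \<le> Q" using LF c by (simp add: Q_def)
  then have "0 \<le> sqrt Q" by simp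
  then have B: "LF < B" using LF unfolding B_def by linarith
  have rB: "r * B \<le> \<sigma>" using r_le B LF by (simp add: B_def Q_def pos_le_divide_eq)
  show D: "LF * r < \<sigma>"
  proof (cases "r = 0")
    case False
    then have "LF * r < r * B" using B r by (simp add: mult.commute)
    then show ?thesis using rB by linarith
  qed (use \<sigma> in simp)
  have "r\<^sup>2 * (c1 * r\<^sup>2 * Lk + LF\<^sup>2 * r\<^sup>2 / 4) + 2 * (c1 * r\<^sup>2) * (c2 * r\<^sup>2)
      = (r\<^sup>2)\<^sup>2 * (c1 * Lk + LF\<^sup>2 / 4 + 2 * c1 * c2)"
    by (simp add: algebra_simps power2_eq_square)
  also have "\<dots> \<le> (r\<^sup>2)\<^sup>2 * Q"
    using mult_left_mono[OF Lk c(1)] by (intro mult_left_mono) (auto simp: Q_def)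
  also have "\<dots> = (r\<^sup>2 * sqrt Q)\<^sup>2"
    using \<open>0 \<le> Q\<close> by (simp add: power_mult_distrib)
  finally have "sqrt (r\<^sup>2 * (c1 * r\<^sup>2 * Lk + LF\<^sup>2 * r\<^sup>2 / 4) + 2 * (c1 * r\<^sup>2) * (c2 * r\<^sup>2))
      \<le> r\<^sup>2 * sqrt Q"
    using \<open>0 \<le> sqrt Q\<close> by (meson real_le_lsqrt mult_nonneg_nonneg zero_le_power2)
  also have "\<dots> \<le> r * (\<sigma> - LF * r) - 3 * LF * r\<^sup>2 / 2"
    using mult_left_mono[OF rB r] by (simp add: B_def algebra_simps power2_eq_square)
  finally show "mid_bound LF \<sigma> r Lk (c1 * r\<^sup>2) (c2 * r\<^sup>2) \<le> r"
    using D by (simp add: mid_bound_def pos_divide_le_eq algebra_simps)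
qed

lemma capped_doubling_iter_bounds:
  fixes LF t :: real
  assumes "0 < t" "t \<le> 2 * LF"
  shows "0 < ((\<lambda>t. min (2 * t) (2 * LF)) ^^ j) t \<and> ((\<lambda>t. min (2 * t) (2 * LF)) ^^ j) t \<le> 2 * LF"
  using assms by (induction j) auto

lemma scheme1_Lk_bounds:
  assumes scheme: "scheme1 F J LF L x0 x Lk \<tau> \<epsilon>"
  shows "0 < Lk k \<and> Lk k \<le> 2 * LF"
proof -
  let ?dbl = "\<lambda>t. min (2 * t) (2 * LF)"
  have L: "0 < L" "L \<le> LF" using scheme by (simp_all add: scheme1_def)
  have start: "\<exists>j. Lk k = (?dbl ^^ j) (if k = 0 then L else max (Lk (k - 1) / 2) L)" for k
    using scheme unfolding scheme1_def Let_def by blast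
  show ?thesis
  proof (induction k)
    case 0
    from start[of 0] obtain j where "Lk 0 = (?dbl ^^ j) L" by auto
    then show ?case using capped_doubling_iter_bounds[of L LF j] L by simp
  next
    case (Suc k)
    from start[of "Suc k"] obtain j where "Lk (Suc k) = (?dbl ^^ j) (max (Lk k / 2) L)" by auto
    moreover have "0 < max (Lk k / 2) L" "max (Lk k / 2) L \<le> 2 * LF" using Suc L by auto
    ultimately show ?case using capped_doubling_iter_bounds[of "max (Lk k / 2) L" LF j] by simp
  qed
qed

lemma scheme1_iterate_in_level:
  assumes scheme: "scheme1 F J LF L x0 x Lk \<tau> \<epsilon>"
  shows "x k \<in> level F (fhat1 F x0)"
proof (induction k)
  case 0
  then show ?case using scheme by (simp add: scheme1_def level_def)
next
  case (Suc k)
  have "fhat1 F (x (Suc k)) \<le> fhat1 F (x k)"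
    using scheme unfolding scheme1_def admissible_step_def by (meson order_trans)
  then show ?case using Suc by (simp add: level_def)
qed

lemma scheme1_step:
  assumes "scheme1 F J LF L x0 x Lk \<tau> \<epsilon>"
  shows "0 < \<tau> k" and "0 \<le> \<epsilon> k" and "admissible_step F J (x k) (Lk k) (\<tau> k) (\<epsilon> k) (x (Suc k))"
  using assms unfolding scheme1_def by blast+

theorem theorem2:
  fixes F :: "real^'n \<Rightarrow> real^'m" and J :: "real^'n \<Rightarrow> real^'n^'m"
    and \<F> :: "(real^'n) set"
    and LF L \<sigma> :: real and x0 xs :: "real^'n"
    and x :: "nat \<Rightarrow> real^'n" and Lk \<tau> \<epsilon> :: "nat \<Rightarrow> real"
  assumes deriv: "\<And>z. (F has_derivative (\<lambda>h. J z *v h)) (at z)"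
    and F_closed: "closed \<F>" and F_convex: "convex \<F>" and F_int: "interior \<F> \<noteq> {}"
    and lev_sub: "level F (fhat1 F x0) \<subseteq> \<F>"
    and seq_in: "\<And>k. x k \<in> \<F>"
    and lip: "\<And>u v. u \<in> \<F> \<Longrightarrow> v \<in> \<F> \<Longrightarrow> frob (Jhat J v - Jhat J u) \<le> LF * norm (v - u)"
    and scheme: "scheme1 F J LF L x0 x Lk \<tau> \<epsilon>"
    and xs_lev: "xs \<in> level F (fhat1 F x0)"
    and xs_zero: "Fhat F xs = 0"
    and sig_pos: "0 < \<sigma>"
    and sig_min: "sigma_min (Jhat J xs) \<ge> \<sigma>"
  shows
    "(\<forall>\<alpha>. 0 < \<alpha> \<and> \<alpha> < 1 \<and> \<sigma> > 2 * LF / \<alpha> \<longrightarrow>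
       (\<forall>k. norm (x k - xs) < \<sigma> / LF - 2 / \<alpha> \<and>
            0 < \<tau> k \<and> \<tau> k \<le> (((\<alpha> * (\<sigma> - LF * norm (x k - xs)) - 3 * LF / 2)\<^sup>2 - LF\<^sup>2 / 4)
                      * (norm (x k - xs)) ^ 4)
                   / ((norm (x k - xs))\<^sup>2 * Lk k + 2 * \<epsilon> k)
          \<longrightarrow> x (Suc k) \<in> level F (fhat1 F x0) \<and>
              norm (x (Suc k) - xs) \<le> mid_bound LF \<sigma> (norm (x k - xs)) (Lk k) (\<tau> k) (\<epsilon> k) \<and>
              mid_bound LF \<sigma> (norm (x k - xs)) (Lk k) (\<tau> k) (\<epsilon> k) \<le> \<alpha> * (norm (x k - xs))\<^sup>2))
     \<and>
     (\<not> (\<exists>\<alpha>. 0 < \<alpha> \<and> \<alpha> < 1 \<and> \<sigma> > 2 * LF / \<alpha>) \<longrightarrow>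
       (\<forall>c1 c2. 0 < c1 \<and> 0 \<le> c2 \<and>
          (\<forall>k. \<tau> k = c1 * (norm (x k - xs))\<^sup>2 \<and> \<epsilon> k = c2 * (norm (x k - xs))\<^sup>2) \<longrightarrow>
          (\<forall>k. norm (x k - xs) \<le> \<sigma> / (5 * LF / 2 + sqrt (2 * c1 * LF + LF\<^sup>2 / 4 + 2 * c1 * c2))
             \<longrightarrow> norm (x (Suc k) - xs) \<le> mid_bound LF \<sigma> (norm (x k - xs)) (Lk k) (\<tau> k) (\<epsilon> k) \<and>
                 mid_bound LF \<sigma> (norm (x k - xs)) (Lk k) (\<tau> k) (\<epsilon> k) \<le> norm (x k - xs) \<and>
                 norm (x (Suc k) - xs) \<le> norm (x k - xs) \<and>
                 x (Suc k) \<in> level F (fhat1 F x0))))"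
proof -
  have LF: "0 < LF" using scheme by (simp add: scheme1_def)
  have xsS: "xs \<in> \<F>" using xs_lev lev_sub by blast
  note Lk = scheme1_Lk_bounds[OF scheme] and lev = scheme1_iterate_in_level[OF scheme]
  have step: "norm (x (Suc k) - xs) \<le> mid_bound LF \<sigma> (norm (x k - xs)) (Lk k) (\<tau> k) (\<epsilon> k)"
    if "LF * norm (x k - xs) < \<sigma>" for k
    using dist_step_root_le_mid_bound[OF deriv F_convex seq_in xsS _ lip xs_zero sig_min]
      scheme1_step[OF scheme] LF Lk[of k] that by simp
  show ?thesis
  proof (rule conjI; intro allI impI; elim conjE)
    fix \<alpha> k
    assume "0 < \<alpha>" "norm (x k - xs) < \<sigma> / LF - 2 / \<alpha>"
      "\<tau> k \<le> (((\<alpha> * (\<sigma> - LF * norm (x k - xs)) - 3 * LF / 2)\<^sup>2 - LF\<^sup>2 / 4) * norm (x k - xs) ^ 4)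
             / ((norm (x k - xs))\<^sup>2 * Lk k + 2 * \<epsilon> k)"
    from mid_bound_le_quadratic[OF LF this(1,2) scheme1_step(1)[OF scheme] _ scheme1_step(2)[OF scheme] this(3)]
    show "x (Suc k) \<in> level F (fhat1 F x0) \<and>
        norm (x (Suc k) - xs) \<le> mid_bound LF \<sigma> (norm (x k - xs)) (Lk k) (\<tau> k) (\<epsilon> k) \<and>
        mid_bound LF \<sigma> (norm (x k - xs)) (Lk k) (\<tau> k) (\<epsilon> k) \<le> \<alpha> * (norm (x k - xs))\<^sup>2"
      using Lk[of k] lev step by simp
  next
    fix c1 c2 :: real and k
    assume "0 < c1" "0 \<le> c2" "\<forall>k. \<tau> k = c1 * (norm (x k - xs))\<^sup>2 \<and> \<epsilon> k = c2 * (norm (x k - xs))\<^sup>2"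
      "norm (x k - xs) \<le> \<sigma> / (5 * LF / 2 + sqrt (2 * c1 * LF + LF\<^sup>2 / 4 + 2 * c1 * c2))"
    from mid_bound_le_radius[OF LF sig_pos norm_ge_zero less_imp_le[OF this(1)] this(2)
        conjunct2[OF Lk[of k]] this(4)] this(3)
    have close: "LF * norm (x k - xs) < \<sigma>"
      and mid: "mid_bound LF \<sigma> (norm (x k - xs)) (Lk k) (\<tau> k) (\<epsilon> k) \<le> norm (x k - xs)"
      by simp_all
    with step[OF close] lev[of "Suc k"]
    show "norm (x (Suc k) - xs) \<le> mid_bound LF \<sigma> (norm (x k - xs)) (Lk k) (\<tau> k) (\<epsilon> k) \<and>
        mid_bound LF \<sigma> (norm (x k - xs)) (Lk k) (\<tau> k) (\<epsilon> k) \<le> norm (x k - xs) \<and>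
        norm (x (Suc k) - xs) \<le> norm (x k - xs) \<and> x (Suc k) \<in> level F (fhat1 F x0)"
      by linarith
  qed
qed

end
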